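(* Let $n\ge 2$. Then $$\max_{\pi}\ \min_{1\le i\le n-1}|\pi_{i+1}-\pi_i| = \lfloor n/2\rfloor,$$ where the maximum is over all permutations $\pi=(\pi_1,\ldots,\pi_n)$ of $\{1,\ldots,n\}$. *)

theory Defs
  imports "HOL-Combinatorics.Permutations"
begin

definition min_gap :: "nat \<Rightarrow> (nat \<Rightarrow> nat) \<Rightarrow> int" where
  "min_gap n \<pi> = Min {\<bar>int (\<pi> (i+1)) - int (\<pi> i)\<bar> | i. 1 \<le> i \<and> i \<le> n - 1}"

end

theory Submission
  imports Defs
begin

text \<open>No arrangement does better than \<open>n div 2\<close>: the middle value \<open>(n + 1) div 2\<close> lies within
  \<open>n div 2\<close> of every value in \<open>{1..n}\<close>, and it has a neighbour. The bound is attained by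
  interleaving the upper and the lower half, \<open>n div 2 + 1, 1, n div 2 + 2, 2, \<dots>\<close>.\<close>

definition zigzag :: "nat \<Rightarrow> nat \<Rightarrow> nat" where
  "zigzag n i =
     (if i \<in> {1..n} then (if odd i then n div 2 + (i + 1) div 2 else i div 2) else i)"

lemma inj_on_zigzag: "inj_on (zigzag n) {1..n}"
  by (rule inj_onI) (auto simp: zigzag_def elim!: oddE evenE split: if_splits)

lemma zigzag_permutes: "zigzag n permutes {1..n}"
proof -
  have "zigzag n ` {1..n} \<subseteq> {1..n}"
    by (auto simp: zigzag_def elim!: oddE)
  then have "zigzag n ` {1..n} = {1..n}"
    using endo_inj_surj inj_on_zigzag by blast
  then have "bij_betw (zigzag n) {1..n} {1..n}"
    using inj_on_zigzag by (simp add: bij_betw_def)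
  moreover have "zigzag n x = x" if "x \<notin> {1..n}" for x
    unfolding zigzag_def using that by (rule if_not_P)
  ultimately show ?thesis
    using bij_imp_permutes by blast
qed

lemma zigzag_gap_ge:
  assumes "i \<in> {1..n - 1}"
  shows "int (n div 2) \<le> \<bar>int (zigzag n (i + 1)) - int (zigzag n i)\<bar>"
proof -
  have "i \<in> {1..n}" "i + 1 \<in> {1..n}"
    using assms by auto
  then show ?thesis
    by (cases "odd i") (auto simp: zigzag_def elim!: oddE evenE)
qed

lemma min_gap_eq_Min_image:
  "min_gap n \<pi> = Min ((\<lambda>i. \<bar>int (\<pi> (i + 1)) - int (\<pi> i)\<bar>) ` {1..n - 1})"
  unfolding min_gap_def by (rule arg_cong[where f = Min]) auto

lemma min_gap_zigzag_ge:
  assumes "n \<ge> 2"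
  shows "int (n div 2) \<le> min_gap n (zigzag n)"
  using assms zigzag_gap_ge by (simp add: min_gap_eq_Min_image Min_ge_iff)

lemma dist_middle_le:
  assumes "w \<in> {1..n}"
  shows "\<bar>int w - int ((n + 1) div 2)\<bar> \<le> int (n div 2)"
  using assms by auto

lemma exists_adjacent_position:
  fixes n q :: nat
  assumes "n \<ge> 2" and "q \<in> {1..n}"
  obtains i where "i \<in> {1..n - 1}" and "q = i \<or> q = i + 1"
proof (cases "q < n")
  case True
  then show ?thesis
    using assms that[of q] by auto
next
  case False
  then show ?thesis
    using assms that[of "q - 1"] by auto
qed

lemma min_gap_le:
  assumes "n \<ge> 2" and \<pi>: "\<pi> permutes {1..n}"
  shows "min_gap n \<pi> \<le> int (n div 2)"
proof -
  let ?mid = "(n + 1) div 2"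
  have "?mid \<in> {1..n}"
    using assms(1) by auto
  then obtain q where q: "q \<in> {1..n}" "\<pi> q = ?mid"
    using \<pi> by (metis permutes_def permutes_in_image)
  obtain i where i: "i \<in> {1..n - 1}" and q_adjacent: "q = i \<or> q = i + 1"
    using exists_adjacent_position[OF assms(1) q(1)] .
  have "i \<in> {1..n}" "i + 1 \<in> {1..n}"
    using i by auto
  then have "\<pi> i \<in> {1..n}" "\<pi> (i + 1) \<in> {1..n}"
    unfolding permutes_in_image[OF \<pi>] .
  then have "\<bar>int (\<pi> (i + 1)) - int (\<pi> i)\<bar> \<le> int (n div 2)"
    using q_adjacent q(2) dist_middle_le[of "\<pi> i" n] dist_middle_le[of "\<pi> (i + 1)" n]
    by (auto simp: abs_minus_commute)
  then show ?thesis
    unfolding min_gap_eq_Min_image using i by (intro Min.coboundedI[THEN order_trans]) auto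
qed

theorem theorem4p1:
  fixes n :: nat
  assumes "n \<ge> 2"
  shows "Max {min_gap n \<pi> | \<pi>. \<pi> permutes {1..n}} = int (n div 2)"
proof (rule Max_eqI)
  have "{min_gap n \<pi> | \<pi>. \<pi> permutes {1..n}} = min_gap n ` {\<pi>. \<pi> permutes {1..n}}"
    by auto
  then show "finite {min_gap n \<pi> | \<pi>. \<pi> permutes {1..n}}"
    using finite_permutations[of "{1..n}"] by simp
next
  fix y
  assume "y \<in> {min_gap n \<pi> | \<pi>. \<pi> permutes {1..n}}"
  then show "y \<le> int (n div 2)"
    using min_gap_le[OF assms] by auto
next
  have "min_gap n (zigzag n) = int (n div 2)"
    using min_gap_le[OF assms zigzag_permutes] min_gap_zigzag_ge[OF assms] by simp
  then show "int (n div 2) \<in> {min_gap n \<pi> | \<pi>. \<pi> permutes {1..n}}"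
    using zigzag_permutes by force
qed

end
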